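(* Let $t$ be an $\mathrm{SL}_2$-tiling with $t_{ij}=1$. Then $t_{xy}\neq 1$ for all $(x,y)$ with $x<i,\ y<j$, and for all $(x,y)$ with $x>i,\ y>j$.
   Context: An $\mathrm{SL}_2$-tiling is a map $t:\mathbb{Z}\times\mathbb{Z}\to\{1,2,3,\dots\}$, $(i,j)\mapsto t_{ij}$, with $t_{ij}t_{i+1,j+1}-t_{i,j+1}t_{i+1,j}=1$ for all $i,j$. *)

theory Defs
  imports Main
begin

definition SL2_tiling :: "(int \<Rightarrow> int \<Rightarrow> int) \<Rightarrow> bool" where
  "SL2_tiling t \<longleftrightarrow>
     (\<forall>i j. t i j \<ge> 1) \<and>
     (\<forall>i j. t i j * t (i+1) (j+1) - t i (j+1) * t (i+1) j = 1)"

end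

theory Submission
  imports Defs
begin

text \<open>All 2x2 minors of an SL2-tiling, not only the adjacent ones, are positive: along two rows
  the quotients of the entries decrease strictly from column to column, because each adjacent
  minor is positive and these inequalities between quotients chain. If t i j = 1, a minor with
  corners (x, y) and (i, j) with x < i, y < j then gives t x y > t x j * t i y \<ge> 1, and symmetrically
  below and to the right of (i, j).\<close>

lemma cross_mult_less_trans:
  fixes a b c d e f :: "'a :: linordered_idom"
  assumes "b * c < a * d" "d * e < c * f" "0 < b" "0 < c" "0 < d" "0 \<le> e"
  shows "b * e < a * f"
proof -
  have "(b * c) * (d * e) < (a * d) * (c * f)"
    by (rule mult_strict_mono) (use assms in \<open>auto intro: less_trans[OF mult_pos_pos]\<close>)
  then have "(b * e) * (c * d) < (a * f) * (c * d)"
    by (simp add: algebra_simps)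
  then show ?thesis
    using assms by (simp add: mult_less_cancel_right)
qed

lemma SL2_tiling_pos:
  assumes "SL2_tiling t"
  shows "0 < t x y"
  using assms unfolding SL2_tiling_def by (meson zero_less_one less_le_trans)

lemma SL2_tiling_adjacent_minor:
  assumes "SL2_tiling t"
  shows "t x (y + 1) * t (x + 1) y < t x y * t (x + 1) (y + 1)"
  using assms unfolding SL2_tiling_def by (metis less_add_one diff_eq_eq add.commute)

lemma SL2_tiling_minor_adjacent_columns:
  assumes T: "SL2_tiling t" and "x < x'"
  shows "t x (y + 1) * t x' y < t x y * t x' (y + 1)"
  using \<open>x < x'\<close>
proof (induction x' rule: int_gr_induct)
  case base
  show ?case using SL2_tiling_adjacent_minor[OF T] .
next
  case (step x')
  show ?case
    by (rule cross_mult_less_trans[OF step.IH SL2_tiling_adjacent_minor[OF T]])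
      (use SL2_tiling_pos[OF T] in \<open>auto intro: less_imp_le\<close>)
qed

lemma SL2_tiling_minor:
  assumes T: "SL2_tiling t" and "x < x'" "y < y'"
  shows "t x y' * t x' y < t x y * t x' y'"
  using \<open>y < y'\<close>
proof (induction y' rule: int_gr_induct)
  case base
  show ?case using SL2_tiling_minor_adjacent_columns[OF T \<open>x < x'\<close>] .
next
  case (step y')
  have "t x' y * t x (y' + 1) < t x y * t x' (y' + 1)"
    by (rule cross_mult_less_trans[of "t x' y" "t x y'" "t x y" "t x' y'"])
      (use step.IH SL2_tiling_minor_adjacent_columns[OF T \<open>x < x'\<close>, of y'] SL2_tiling_pos[OF T]
        in \<open>auto simp: mult.commute intro: less_imp_le\<close>)
  then show ?case by (simp add: mult.commute)
qed

theorem proposition6p2: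
  fixes t :: "int \<Rightarrow> int \<Rightarrow> int" and i j :: int
  assumes "SL2_tiling t" and "t i j = 1"
  shows "(\<forall>x y. x < i \<and> y < j \<longrightarrow> t x y \<noteq> 1) \<and>
         (\<forall>x y. x > i \<and> y > j \<longrightarrow> t x y \<noteq> 1)"
proof -
  have product_ge_1: "1 \<le> t a b * t c d" for a b c d
    using assms(1) unfolding SL2_tiling_def by (metis mult_mono mult_1_right zero_le_one order.trans)
  show ?thesis
  proof (intro conjI allI impI)
    fix x y assume "x < i \<and> y < j"
    then have "t x j * t i y < t x y * t i j" using SL2_tiling_minor[OF assms(1)] by blast
    then show "t x y \<noteq> 1" using assms(2) product_ge_1[of x j i y] by auto
  next
    fix x y assume "x > i \<and> y > j"
    then have "t i y * t x j < t i j * t x y" using SL2_tiling_minor[OF assms(1)] by blast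
    then show "t x y \<noteq> 1" using assms(2) product_ge_1[of i y x j] by auto
  qed
qed

end
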